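(* For a topological space $(X,\tau)$ the following are equivalent: (1) for every compact subset $F$ of $X$ and every $y\notin F$ there exists a set $A_y$ with $F\subseteq A_y$ and $y\notin A_y$ such that $A_y$ is either open or closed; (2) $X$ is $T_{\frac13}$, i.e. every compact subset of $X$ is $\lambda$-closed.
   Context: A $\Lambda$-set is an intersection of a family of open sets. A set $A$ is $\lambda$-closed if $A=L\cap C$ with $L$ a $\Lambda$-set and $C$ closed. *)

theory Defs
  imports "HOL-Analysis.Analysis"
begin

text \<open>A Lambda-set: intersection of a family of open sets (the empty family gives the whole space).\<close>
definition lambda_set :: "'a topology \<Rightarrow> 'a set \<Rightarrow> bool" where
  "lambda_set X L \<longleftrightarrow> (\<exists>\<U>. (\<forall>U\<in>\<U>. openin X U) \<and> L = topspace X \<inter> \<Inter>\<U>)"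

definition lambda_closed :: "'a topology \<Rightarrow> 'a set \<Rightarrow> bool" where
  "lambda_closed X A \<longleftrightarrow> (\<exists>L C. lambda_set X L \<and> closedin X C \<and> A = L \<inter> C)"

definition T_one_third :: "'a topology \<Rightarrow> bool" where
  "T_one_third X \<longleftrightarrow> (\<forall>F. compactin X F \<longrightarrow> lambda_closed X F)"

end

theory Submission
  imports Defs
begin

text \<open>A point outside S lies outside ker S exactly when some open superset of S misses it, and
  outside cl S exactly when some closed superset of S misses it.\<close>

definition lambda_kernel :: "'a topology \<Rightarrow> 'a set \<Rightarrow> 'a set" where
  "lambda_kernel X S = topspace X \<inter> \<Inter>{U. openin X U \<and> S \<subseteq> U}"

lemma lambda_set_lambda_kernel: "lambda_set X (lambda_kernel X S)"
  unfolding lambda_set_def lambda_kernel_def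
  by (rule exI[where x="{U. openin X U \<and> S \<subseteq> U}"]) simp

lemma lambda_kernel_subset_topspace: "lambda_kernel X S \<subseteq> topspace X"
  unfolding lambda_kernel_def by blast

lemma subset_lambda_kernel: "S \<subseteq> topspace X \<Longrightarrow> S \<subseteq> lambda_kernel X S"
  unfolding lambda_kernel_def by blast

lemma lambda_kernel_subset_lambda_set:
  assumes "lambda_set X L" "S \<subseteq> L"
  shows "lambda_kernel X S \<subseteq> L"
proof -
  obtain \<U> where \<U>: "\<forall>U\<in>\<U>. openin X U" and L: "L = topspace X \<inter> \<Inter>\<U>"
    using assms(1) unfolding lambda_set_def by blast
  have "\<U> \<subseteq> {U. openin X U \<and> S \<subseteq> U}"
    using \<U> L assms(2) by blast
  then show ?thesis
    unfolding lambda_kernel_def L by blast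
qed

lemma notin_lambda_kernel_iff:
  assumes "y \<in> topspace X"
  shows "y \<notin> lambda_kernel X S \<longleftrightarrow> (\<exists>U. openin X U \<and> S \<subseteq> U \<and> y \<notin> U)"
  using assms unfolding lambda_kernel_def by blast

lemma notin_closure_of_iff:
  assumes "S \<subseteq> topspace X" "y \<in> topspace X"
  shows "y \<notin> X closure_of S \<longleftrightarrow> (\<exists>C. closedin X C \<and> S \<subseteq> C \<and> y \<notin> C)"
proof
  assume "y \<notin> X closure_of S"
  moreover have "S \<subseteq> X closure_of S"
    using assms(1) by (rule closure_of_subset)
  ultimately show "\<exists>C. closedin X C \<and> S \<subseteq> C \<and> y \<notin> C"
    using closedin_closure_of by blast
next
  assume "\<exists>C. closedin X C \<and> S \<subseteq> C \<and> y \<notin> C"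
  then show "y \<notin> X closure_of S"
    using closure_of_minimal by blast
qed

lemma subset_lambda_kernel_inter_closure_of:
  "S \<subseteq> topspace X \<Longrightarrow> S \<subseteq> lambda_kernel X S \<inter> X closure_of S"
  using subset_lambda_kernel closure_of_subset by (metis le_inf_iff)

lemma lambda_closed_iff_kernel_inter_closure:
  assumes "S \<subseteq> topspace X"
  shows "lambda_closed X S \<longleftrightarrow> S = lambda_kernel X S \<inter> X closure_of S"
proof
  assume "lambda_closed X S"
  then obtain L C where L: "lambda_set X L" and C: "closedin X C" and S: "S = L \<inter> C"
    unfolding lambda_closed_def by blast
  have "lambda_kernel X S \<subseteq> L"
    using L S by (simp add: lambda_kernel_subset_lambda_set)
  moreover have "X closure_of S \<subseteq> C"
    using C S by (simp add: closure_of_minimal)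
  ultimately show "S = lambda_kernel X S \<inter> X closure_of S"
    using S subset_lambda_kernel_inter_closure_of[OF assms] by blast
next
  assume "S = lambda_kernel X S \<inter> X closure_of S"
  then show "lambda_closed X S"
    unfolding lambda_closed_def using lambda_set_lambda_kernel closedin_closure_of by blast
qed

lemma lambda_closed_iff_separated:
  assumes "S \<subseteq> topspace X"
  shows "lambda_closed X S \<longleftrightarrow>
           (\<forall>y \<in> topspace X - S. \<exists>A. S \<subseteq> A \<and> y \<notin> A \<and> (openin X A \<or> closedin X A))"
proof -
  have outside_iff: "y \<notin> lambda_kernel X S \<inter> X closure_of S \<longleftrightarrow>
          (\<exists>A. S \<subseteq> A \<and> y \<notin> A \<and> (openin X A \<or> closedin X A))"
    if "y \<in> topspace X" for y
  proof -
    have "y \<notin> lambda_kernel X S \<inter> X closure_of S \<longleftrightarrow>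
          (\<exists>U. openin X U \<and> S \<subseteq> U \<and> y \<notin> U) \<or> (\<exists>C. closedin X C \<and> S \<subseteq> C \<and> y \<notin> C)"
      by (simp add: notin_lambda_kernel_iff[OF that] notin_closure_of_iff[OF assms that])
    also have "\<dots> \<longleftrightarrow> (\<exists>A. S \<subseteq> A \<and> y \<notin> A \<and> (openin X A \<or> closedin X A))"
      by auto
    finally show ?thesis .
  qed
  have "S = lambda_kernel X S \<inter> X closure_of S \<longleftrightarrow>
      (\<forall>y \<in> topspace X - S. y \<notin> lambda_kernel X S \<inter> X closure_of S)"
    using subset_lambda_kernel_inter_closure_of[OF assms] lambda_kernel_subset_topspace[of X S]
    by blast
  then show ?thesis
    using lambda_closed_iff_kernel_inter_closure[OF assms] outside_iff by simp
qed

theorem mainTheorem9: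
  fixes X :: "'a topology"
  shows "(\<forall>F y. compactin X F \<and> y \<in> topspace X \<and> y \<notin> F \<longrightarrow>
            (\<exists>A. F \<subseteq> A \<and> y \<notin> A \<and> (openin X A \<or> closedin X A)))
         \<longleftrightarrow> T_one_third X"
  unfolding T_one_third_def
  by (auto simp: lambda_closed_iff_separated compactin_subset_topspace)

end
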